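(* The algorithm Balance is not competitive for the infinite server problem on the real line.
   Context: Infinite server problem on the real line: an unbounded number of servers initially reside at a source point; a finite sequence of requests is revealed one by one; each must be served immediately, without knowledge of future requests, by moving a server to it; the cost is the total distance traveled. Balance serves a request $r$ by moving to $r$ a server $x$ minimizing $D_x+d(x,r)$, where $D_x$ is the cumulative distance traveled by $x$ so far and $d(x,r)$ is its distance to $r$ (servers still at the source have $D_x=0$). An online algorithm is competitive if there are $\rho,c$ with $ALG(\sigma)\le\rho\,OPT(\sigma)+c$ for all request sequences $\sigma$. *)

theory Defs
  imports Main Complex_Main
begin

text \<open>Servers that have moved at least once are recorded in a configuration list
  of pairs (position, cumulative distance travelled D_x).  All other servers
  (unboundedly many) are still at the source with D_x = 0.
  A choice None means: use a fresh server from the source;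
  Some i (i < length C) means: use the i-th moved server.\<close>

type_synonym conf = "(real \<times> real) list"

type_synonym policy = "real list \<Rightarrow> conf \<Rightarrow> real \<Rightarrow> nat option"

definition step :: "real \<Rightarrow> real \<Rightarrow> conf \<Rightarrow> nat option \<Rightarrow> conf \<times> real" where
  "step s r C ch =
     (case ch of
        Some i \<Rightarrow> (if i < length C
                   then (C[i := (r, snd (C!i) + \<bar>fst (C!i) - r\<bar>)], \<bar>fst (C!i) - r\<bar>)
                   else (C @ [(r, \<bar>r - s\<bar>)], \<bar>r - s\<bar>))
      | None \<Rightarrow> (C @ [(r, \<bar>r - s\<bar>)], \<bar>r - s\<bar>))"

text \<open>Total cost of serving the remaining requests with a (history dependent) policy;
  h is the list of requests revealed so far.\<close>
fun exec :: "real \<Rightarrow> policy \<Rightarrow> real list \<Rightarrow> conf \<Rightarrow> real list \<Rightarrow> real" where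
  "exec s pol h C [] = 0"
| "exec s pol h C (r # rs) =
     (let (C', c) = step s r C (pol h C r) in c + exec s pol (h @ [r]) C' rs)"

definition alg_cost :: "real \<Rightarrow> policy \<Rightarrow> real list \<Rightarrow> real" where
  "alg_cost s pol \<sigma> = exec s pol [] [] \<sigma>"

text \<open>Offline optimum: the best cost over all ways of serving sigma
  (a policy may depend on everything, sigma being fixed).\<close>
definition OPT :: "real \<Rightarrow> real list \<Rightarrow> real" where
  "OPT s \<sigma> = Inf (range (\<lambda>pol. alg_cost s pol \<sigma>))"

definition bal_val :: "real \<Rightarrow> conf \<Rightarrow> real \<Rightarrow> nat option \<Rightarrow> real" where
  "bal_val s C r ch =
     (case ch of Some i \<Rightarrow> snd (C!i) + \<bar>fst (C!i) - r\<bar> | None \<Rightarrow> \<bar>r - s\<bar>)"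

definition balance_choice :: "real \<Rightarrow> conf \<Rightarrow> real \<Rightarrow> nat option \<Rightarrow> bool" where
  "balance_choice s C r ch \<longleftrightarrow>
     (\<forall>i. ch = Some i \<longrightarrow> i < length C) \<and>
     bal_val s C r ch \<le> \<bar>r - s\<bar> \<and>
     (\<forall>j < length C. bal_val s C r ch \<le> bal_val s C r (Some j))"

text \<open>A (deterministic) implementation of Balance: any tie-breaking rule.\<close>
definition is_balance :: "real \<Rightarrow> policy \<Rightarrow> bool" where
  "is_balance s pol \<longleftrightarrow> (\<forall>h C r. balance_choice s C r (pol h C r))"

definition competitive :: "real \<Rightarrow> policy \<Rightarrow> bool" where
  "competitive s pol \<longleftrightarrow>
     (\<exists>\<rho> c. \<forall>\<sigma>. alg_cost s pol \<sigma> \<le> \<rho> * OPT s \<sigma> + c)"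

end

theory Submission
  imports Defs
begin

text \<open>Feed requests that decrease strictly towards the point at distance 1 from the source.
  A moved server sitting above the new request has already travelled at least its distance
  from the source, so reusing it costs Balance more than a fresh server does: Balance pays at
  least 1 per request and thus unboundedly much.  Offline, a single server walking down the
  sequence pays at most 3.\<close>

lemma exec_nonneg: "0 \<le> exec s pol h C rs"
proof (induction rs arbitrary: h C)
  case Nil
  then show ?case by simp
next
  case (Cons r rs)
  obtain C' c where st: "step s r C (pol h C r) = (C', c)"
    by (cases "step s r C (pol h C r)")
  have "0 \<le> c" using st by (auto simp: step_def split: option.splits if_splits)
  then show ?case using st Cons[of "h @ [r]" C'] by simp
qed

lemma OPT_nonneg: "0 \<le> OPT s \<sigma>"
  unfolding OPT_def by (rule cInf_greatest) (auto simp: alg_cost_def exec_nonneg)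

lemma OPT_le_alg_cost: "OPT s \<sigma> \<le> alg_cost s pol \<sigma>"
proof -
  have "bdd_below (range (\<lambda>pol. alg_cost s pol \<sigma>))"
    by (rule bdd_belowI[of _ 0]) (auto simp: alg_cost_def exec_nonneg)
  then show ?thesis unfolding OPT_def by (rule cInf_lower[rotated]) simp
qed

lemma not_competitive_if_OPT_bounded:
  assumes "\<And>n. OPT s (\<sigma> n) \<le> B"
    and "\<And>n. real n \<le> alg_cost s pol (\<sigma> n)"
  shows "\<not> competitive s pol"
proof
  assume "competitive s pol"
  then obtain \<rho> c where comp: "\<And>\<sigma>. alg_cost s pol \<sigma> \<le> \<rho> * OPT s \<sigma> + c"
    unfolding competitive_def by blast
  define n where "n = nat \<lceil>\<bar>\<rho>\<bar> * B + \<bar>c\<bar>\<rceil> + 1"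
  have "\<rho> * OPT s (\<sigma> n) \<le> \<bar>\<rho>\<bar> * B"
  proof -
    have "\<rho> * OPT s (\<sigma> n) \<le> \<bar>\<rho>\<bar> * OPT s (\<sigma> n)"
      using OPT_nonneg by (simp add: mult_right_mono)
    also have "\<dots> \<le> \<bar>\<rho>\<bar> * B" using assms(1) by (simp add: mult_left_mono)
    finally show ?thesis .
  qed
  moreover have "\<bar>\<rho>\<bar> * B + \<bar>c\<bar> < real n" unfolding n_def by linarith
  ultimately show False using comp[of "\<sigma> n"] assms(2)[of n] by linarith
qed

lemma balance_choice_fresh_server:
  assumes "balance_choice s C r ch" and "s < r"
    and "\<forall>p\<in>set C. r < fst p \<and> fst p - s \<le> snd p"
  shows "ch = None"
proof (rule ccontr)
  assume "ch \<noteq> None"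
  then obtain i where i: "ch = Some i" by auto
  with assms(1) have "i < length C" and le: "snd (C!i) + \<bar>fst (C!i) - r\<bar> \<le> \<bar>r - s\<bar>"
    unfolding balance_choice_def bal_val_def by auto
  then have "r < fst (C!i) \<and> fst (C!i) - s \<le> snd (C!i)"
    using assms(3) nth_mem by blast
  then show False using le \<open>s < r\<close> by auto
qed

lemma exec_balance_descending:
  assumes bal: "is_balance s pol"
    and "sorted_wrt (>) rs" and "\<forall>r\<in>set rs. s < r"
    and "\<forall>p\<in>set C. (\<forall>r\<in>set rs. r < fst p) \<and> fst p - s \<le> snd p"
  shows "exec s pol h C rs = (\<Sum>r\<leftarrow>rs. r - s)"
  using assms(2-)
proof (induction rs arbitrary: h C)
  case Nil
  then show ?case by simp
next
  case (Cons r rs)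
  have "pol h C r = None"
    using balance_choice_fresh_server[of s C r "pol h C r"] bal Cons.prems
    unfolding is_balance_def by auto
  then have "step s r C (pol h C r) = (C @ [(r, r - s)], r - s)"
    using Cons.prems(2) by (simp add: step_def)
  moreover have "exec s pol (h @ [r]) (C @ [(r, r - s)]) rs = (\<Sum>r\<leftarrow>rs. r - s)"
    by (rule Cons.IH) (use Cons.prems in auto)
  ultimately show ?case by simp
qed

definition follow_first :: policy where
  "follow_first = (\<lambda>h C r. if C = [] then None else Some 0)"

lemma exec_follow_first_descending:
  assumes "sorted_wrt (>) rs" and "\<forall>r\<in>set rs. a \<le> r \<and> r \<le> x" and "a \<le> x"
  shows "exec s follow_first h [(x, D)] rs \<le> x - a"
  using assms
proof (induction rs arbitrary: h x D)
  case Nil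
  then show ?case by simp
next
  case (Cons r rs)
  have "step s r [(x, D)] (follow_first h [(x, D)] r) = ([(r, D + \<bar>x - r\<bar>)], \<bar>x - r\<bar>)"
    by (simp add: step_def follow_first_def)
  moreover have "exec s follow_first (h @ [r]) [(r, D + \<bar>x - r\<bar>)] rs \<le> r - a"
    by (rule Cons.IH) (use Cons.prems in auto)
  ultimately show ?case using Cons.prems(2) by simp
qed

lemma alg_cost_follow_first_descending:
  assumes "sorted_wrt (>) (r # rs)" and "\<forall>r'\<in>set (r # rs). a \<le> r'"
  shows "alg_cost s follow_first (r # rs) \<le> \<bar>r - s\<bar> + (r - a)"
proof -
  have "step s r [] (follow_first [] [] r) = ([(r, \<bar>r - s\<bar>)], \<bar>r - s\<bar>)"
    by (simp add: step_def follow_first_def)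
  moreover have "exec s follow_first [r] [(r, \<bar>r - s\<bar>)] rs \<le> r - a"
    by (rule exec_follow_first_descending) (use assms in \<open>auto simp: less_imp_le\<close>)
  ultimately show ?thesis by (simp add: alg_cost_def)
qed

definition descending_requests :: "real \<Rightarrow> nat \<Rightarrow> real list" where
  "descending_requests s n = map (\<lambda>k. s + 1 + 1 / (real k + 1)) [0..<n]"

lemma descending_requests_sorted: "sorted_wrt (>) (descending_requests s n)"
  unfolding descending_requests_def sorted_wrt_map
  by (rule sorted_wrt_mono_rel[OF _ sorted_wrt_upt]) (auto simp: frac_less2)

lemma descending_requests_range: "\<forall>r\<in>set (descending_requests s n). s + 1 < r \<and> r \<le> s + 2"
  unfolding descending_requests_def by auto

lemma OPT_descending_requests_le: "OPT s (descending_requests s n) \<le> 3"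
proof (cases "descending_requests s n")
  case Nil
  then show ?thesis using OPT_le_alg_cost[of s "[]" follow_first] by (simp add: alg_cost_def)
next
  case (Cons r rs)
  have "OPT s (r # rs) \<le> \<bar>r - s\<bar> + (r - (s + 1))"
    by (rule order_trans[OF OPT_le_alg_cost alg_cost_follow_first_descending])
      (use descending_requests_sorted[of s n] descending_requests_range[of s n] Cons
        in \<open>auto simp: less_imp_le\<close>)
  moreover have "r \<le> s + 2" using descending_requests_range[of s n] Cons by simp
  ultimately show ?thesis using Cons by simp
qed

lemma alg_cost_balance_descending_requests:
  assumes "is_balance s pol"
  shows "real n \<le> alg_cost s pol (descending_requests s n)"
proof -
  let ?\<sigma> = "descending_requests s n"
  have "alg_cost s pol ?\<sigma> = (\<Sum>r\<leftarrow>?\<sigma>. r - s)"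
    unfolding alg_cost_def using descending_requests_range[of s n]
    by (intro exec_balance_descending[OF assms descending_requests_sorted]) auto
  also have "(\<Sum>r\<leftarrow>?\<sigma>. r - s) \<ge> (\<Sum>r\<leftarrow>?\<sigma>. 1)"
    using descending_requests_range[of s n] by (intro sum_list_mono) auto
  also have "(\<Sum>r\<leftarrow>?\<sigma>. 1) = real n"
    by (simp only: sum_list_triv) (simp add: descending_requests_def)
  finally show ?thesis .
qed

theorem proposition4:
  fixes s :: real and pol :: policy
  assumes "is_balance s pol"
  shows "\<not> competitive s pol"
  using not_competitive_if_OPT_bounded[of s "descending_requests s" 3 pol]
    OPT_descending_requests_le alg_cost_balance_descending_requests[OF assms]
  by blast

end
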